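(* Let $\lambda,\mu$ be partitions and $x$ an indeterminate. Put $$X_{\lambda\mu}(x):=\prod_{(i,j)\in[\mu]}(j-i-x)\prod_{(i,j)\in [\lambda]}\biggl((j-i-\mu_1+x)\prod_{1\le k\le\mu_1}\frac{j-i+\bar{\mu}_k-k+1+x}{j-i+\bar{\mu}_k-k+x}\biggr)$$ and, for a non-negative integer $L$, $$Y^{L}_{\lambda\mu}(x):=(-1)^{\binom L2}x^L\,\frac{\displaystyle\prod_{a\in B_L^\lambda}\prod_{1\leq i\leq a}(i+x)\prod_{b\in B_L^\mu}\prod_{1\le j\le b}(j-x)}{\displaystyle\prod_{(a,b)\in B_L^\lambda\times B_L^\mu}(a-b+x)}.$$ Then $X_{\lambda\mu}(x)=Y^L_{\lambda\mu}(x)$ for every integer $L\geq \max\{\ell(\lambda), \ell(\mu)\}$.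
   Context: For a partition $\lambda=(\lambda_1\ge\lambda_2\ge\cdots)$, $\ell(\lambda)$ is the number of nonzero parts, $[\lambda]=\{(i,j): i\ge1,\ 1\le j\le\lambda_i\}$ is its diagram, and $\bar\lambda$ is the conjugate partition ($\bar\lambda_k$ = number of $i$ with $\lambda_i\ge k$). For an integer $L\ge\ell(\lambda)$, the set of $L$-beta numbers of $\lambda$ is $B^\lambda_L=\{\lambda_i+L-i : 1\le i\le L\}$ (with $\lambda_i=0$ for $i>\ell(\lambda)$). *)

theory Defs
  imports "HOL-Computational_Algebra.Polynomial" "HOL-Computational_Algebra.Fraction_Field"
begin

definition is_partition :: "nat list \<Rightarrow> bool" where
  "is_partition lam \<longleftrightarrow> sorted_wrt (\<ge>) lam \<and> 0 \<notin> set lam"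

text \<open>1-indexed parts, with lam_i = 0 for i beyond the length (and for i = 0).\<close>
definition part :: "nat list \<Rightarrow> nat \<Rightarrow> nat" where
  "part lam i = (if 1 \<le> i \<and> i \<le> length lam then lam ! (i - 1) else 0)"

text \<open>The length ell(lam) is the number of nonzero parts, i.e. length lam.\<close>
definition plen :: "nat list \<Rightarrow> nat" where
  "plen lam = length lam"

definition diagram :: "nat list \<Rightarrow> (nat \<times> nat) set" where
  "diagram lam = {(i, j). 1 \<le> i \<and> 1 \<le> j \<and> j \<le> part lam i}"

definition conjp :: "nat list \<Rightarrow> nat \<Rightarrow> nat" where
  "conjp lam k = card {i. 1 \<le> i \<and> k \<le> part lam i}"

definition beta_set :: "nat \<Rightarrow> nat list \<Rightarrow> nat set" where
  "beta_set L lam = {part lam i + L - i | i. 1 \<le> i \<and> i \<le> L}"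

definition xind :: "rat poly fract" where
  "xind = Fract [:0, 1:] 1"

definition Xfun :: "nat list \<Rightarrow> nat list \<Rightarrow> rat poly fract" where
  "Xfun lam mu =
     (\<Prod>(i, j) \<in> diagram mu. of_int (int j - int i) - xind) *
     (\<Prod>(i, j) \<in> diagram lam.
        (of_int (int j - int i - int (part mu 1)) + xind) *
        (\<Prod>k \<in> {1..part mu 1}.
           (of_int (int j - int i + int (conjp mu k) - int k + 1) + xind) /
           (of_int (int j - int i + int (conjp mu k) - int k) + xind)))"

definition Yfun :: "nat \<Rightarrow> nat list \<Rightarrow> nat list \<Rightarrow> rat poly fract" where
  "Yfun L lam mu =
     (-1) ^ (L choose 2) * xind ^ L *
     ((\<Prod>a \<in> beta_set L lam. \<Prod>i \<in> {1..a}. of_nat i + xind) *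
      (\<Prod>b \<in> beta_set L mu. \<Prod>j \<in> {1..b}. of_nat j - xind)) /
     (\<Prod>(a, b) \<in> beta_set L lam \<times> beta_set L mu. of_int (int a - int b) + xind)"

end

theory Submission
  imports Defs
begin

text \<open>
  For a cell (i, j) of lambda put y = x + j - i. With phi z = (z + 1) (z - 1) / z^2 the factor of
  that cell in X equals y times the product of phi (y + i' - k) over the cells (i', k) of mu, the
  product over k telescoping along the columns of mu. Telescoping along the rows of mu instead
  rewrites the factor as (y + L) times the product over i' of (y + i' - mu_i' - 1) / (y + i' - mu_i').
  Along a row of lambda these quotients telescope once more, to
  (x + i' - i - mu_i') / (x + a - b) with a = lambda_i + L - i and b = mu_i' + L - i', which yields
  the denominator of Y. For fixed i' the numerators combine with the factors j - i' - x of the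
  i'-th row of mu into the consecutive linear factors t - x, 1 - i' \<le> t \<le> mu_i' + L - i', and the
  factors y + L complete rising factorials: this gives the numerator of Y.
\<close>

lemma prod_of_nat_add_eq_pochhammer:
  "(\<Prod>i\<in>{1..n}. of_nat i + x) = pochhammer (x + 1) n"
  by (induction n) (simp_all add: pochhammer_Suc atLeastAtMostSuc_conv ac_simps)

lemma prod_of_nat_diff_eq_pochhammer:
  fixes x :: "'a::comm_ring_1"
  shows "(\<Prod>i\<in>{1..n}. of_nat i - x) = pochhammer (1 - x) n"
  using prod_of_nat_add_eq_pochhammer[where x = "- x"] by (simp add: add_ac)

lemma prod_int_interval_reindex:
  "(\<Prod>j\<in>{1..n}. f (int j + c)) = (\<Prod>t\<in>{c + 1..c + int n}. f t)"
  by (rule prod.reindex_bij_witness[where i = "\<lambda>t. nat (t - c)" and j = "\<lambda>j. int j + c"]) auto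

lemma prod_int_interval_split:
  fixes a b c :: int
  assumes "a \<le> b + 1" "b \<le> c"
  shows "(\<Prod>t\<in>{a..c}. f t) = (\<Prod>t\<in>{a..b}. f t) * (\<Prod>t\<in>{b + 1..c}. f t)"
proof -
  have "{a..c} = {a..b} \<union> {b + 1..c}"
    using assms by auto
  then show ?thesis
    by (simp add: prod.union_disjoint)
qed

lemma prod_linear_factors_around_zero:
  fixes x :: "'a::field"
  shows "(\<Prod>t\<in>{- int a..int b}. of_int t - x)
    = (- 1) ^ Suc a * x * pochhammer (x + 1) a * pochhammer (1 - x) b"
proof -
  have negative: "(\<Prod>t\<in>{- int a..- 1}. of_int t - x) = (- 1) ^ a * pochhammer (x + 1) a"
  proof -
    have "(\<Prod>t\<in>{- int a..- 1}. of_int t - x) = (\<Prod>j\<in>{1..a}. - (of_nat j + x))"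
      by (rule prod.reindex_bij_witness[where i = "\<lambda>j. - int j" and j = "\<lambda>t. nat (- t)"]) auto
    also have "\<dots> = (- 1) ^ a * pochhammer (x + 1) a"
      by (simp only: prod_uminus prod_of_nat_add_eq_pochhammer) simp
    finally show ?thesis .
  qed
  have "(\<Prod>t\<in>{1..int b}. of_int t - x) = (\<Prod>j\<in>{1..b}. of_nat j - x)"
    using prod_int_interval_reindex[where f = "\<lambda>t. of_int t - x" and c = 0 and n = b] by simp
  then have positive: "(\<Prod>t\<in>{1..int b}. of_int t - x) = pochhammer (1 - x) b"
    by (simp only: prod_of_nat_diff_eq_pochhammer)
  have "(\<Prod>t\<in>{- int a..int b}. of_int t - x)
      = (\<Prod>t\<in>{- int a..- 1}. of_int t - x) * (\<Prod>t\<in>{0..int b}. of_int t - x)"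
    using prod_int_interval_split[where a = "- int a" and b = "- 1" and c = "int b"] by simp
  also have "(\<Prod>t\<in>{0..int b}. of_int t - x) = - x * (\<Prod>t\<in>{1..int b}. of_int t - x)"
    by (subst prod_int_interval_split[of 0 0]) simp_all
  finally show ?thesis
    by (simp add: negative positive)
qed

lemma prod_sign_choose_two:
  "(\<Prod>i\<in>{1..L}. (- 1 :: 'a::comm_ring_1) ^ (L + i)) = (- 1) ^ (L choose 2)"
proof (induction L)
  case (Suc L)
  have "(\<Prod>i\<in>{1..Suc L}. (- 1 :: 'a) ^ (Suc L + i)) = (\<Prod>i\<in>{1..L}. - ((- 1) ^ (L + i)))"
    by (simp add: atLeastAtMostSuc_conv)
  also have "\<dots> = (- 1) ^ (L + (L choose 2))"
    unfolding prod_uminus Suc.IH by (simp add: power_add)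
  finally show ?case
    by (simp add: numeral_2_eq_2)
qed (simp add: numeral_2_eq_2)

text \<open>A constant rather than x + of_int c, so that the simplifier does not split the offset.\<close>

definition shift :: "'a::field \<Rightarrow> int \<Rightarrow> 'a" where
  "shift x c = x + of_int c"

definition shift_generic :: "'a::field \<Rightarrow> bool" where
  "shift_generic x \<longleftrightarrow> (\<forall>c. shift x c \<noteq> 0)"

lemma shift_0 [simp]: "shift x 0 = x"
  by (simp add: shift_def)

lemma shift_shift [simp]: "shift (shift x c) d = shift x (c + d)"
  by (simp add: shift_def)

lemma shift_uminus: "shift (- x) c = - shift x (- c)"
  by (simp add: shift_def)

lemma of_int_add_eq_shift: "of_int c + x = shift x c"
  by (simp add: shift_def add.commute)

lemma shift_generic_nonzero [simp]: "shift_generic x \<Longrightarrow> shift x c \<noteq> 0"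
  by (simp add: shift_generic_def)

lemma shift_generic_shift: "shift_generic x \<Longrightarrow> shift_generic (shift x c)"
  by (simp add: shift_generic_def)

lemma shift_generic_uminus: "shift_generic x \<Longrightarrow> shift_generic (- x)"
  by (simp add: shift_generic_def shift_uminus)

text \<open>The quotient of (z + 1) / z by z / (z - 1).\<close>

definition phi :: "'a::field \<Rightarrow> 'a" where
  "phi z = (z + 1) * (z - 1) / (z * z)"

lemma phi_uminus: "phi (- z) = phi z"
  by (simp add: phi_def algebra_simps)

lemma shift_ratio_telescope:
  assumes "shift_generic z"
  shows "shift z (int n + 1) / shift z (int n) = shift z 1 / z * (\<Prod>i\<in>{1..n}. phi (shift z (int i)))"
proof (induction n)
  case 0
  then show ?case by simp
next
  case (Suc n)
  define u where "u = shift z (int (Suc n))"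
  have u: "shift z (int (Suc n) + 1) = u + 1" "shift z (int n + 1) = u" "shift z (int n) = u - 1"
    by (simp_all add: u_def shift_def)
  have "u + 1 \<noteq> 0" "u \<noteq> 0" "u - 1 \<noteq> 0"
    using assms u u_def by (metis shift_generic_nonzero)+
  then have "shift z (int (Suc n) + 1) / shift z (int (Suc n))
      = shift z (int n + 1) / shift z (int n) * phi (shift z (int (Suc n)))"
    unfolding u u_def[symmetric] by (simp add: phi_def field_simps)
  then show ?case
    using Suc by (simp add: atLeastAtMostSuc_conv)
qed

lemma shift_ratio_telescope_down:
  assumes "shift_generic z"
  shows "shift z (- int n - 1) / shift z (- int n) = shift z (- 1) / z * (\<Prod>i\<in>{1..n}. phi (shift z (- int i)))"
  using shift_ratio_telescope[OF shift_generic_uminus[OF assms], of n]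
  by (simp add: shift_uminus phi_uminus)

lemma prod_shift_quotient:
  assumes "shift_generic z"
  shows "(\<Prod>i\<in>{1..n}. shift z (int i - 1) / shift z (int i)) = z / shift z (int n)"
proof (induction n)
  case 0
  show ?case
    using shift_generic_nonzero[OF assms, of 0] by simp
next
  case (Suc n)
  then show ?case
    using assms by (simp add: atLeastAtMostSuc_conv)
qed

lemma prod_shift_quotient_down:
  assumes "shift_generic z"
  shows "(\<Prod>i\<in>{1..n}. shift z (1 - int i) / shift z (- int i)) = z / shift z (- int n)"
  using prod_shift_quotient[OF shift_generic_uminus[OF assms], of n]
  by (simp add: shift_uminus)

text \<open>The two products together run over the factors t - x with 1 - i' \<le> t \<le> m + L - i'.\<close>

lemma prod_column_factors:
  fixes x :: "'a::field"
  assumes "1 \<le> i'" "i' \<le> L"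
  shows "(\<Prod>j\<in>{1..m}. of_int (int j - int i') - x) * (\<Prod>i\<in>{1..L}. shift x (int i' - int i - int m))
    = (- 1) ^ (L + i') * x * pochhammer (x + 1) (i' - 1) * pochhammer (1 - x) (m + L - i')"
proof -
  define P where "P a b = (\<Prod>t\<in>{a..b}. of_int t - x)" for a b
  have first: "(\<Prod>j\<in>{1..m}. of_int (int j - int i') - x) = P (1 - int i') (int m - int i')"
    using prod_int_interval_reindex[where f = "\<lambda>t. of_int t - x" and c = "- int i'" and n = m]
    by (simp add: P_def)
  have "(\<Prod>i\<in>{1..L}. shift x (int i' - int i - int m))
      = (\<Prod>i\<in>{1..L}. - (of_int (int i + (int m - int i')) - x))"
    by (rule prod.cong) (simp_all add: shift_def)
  also have "\<dots> = (- 1) ^ L * P (int m - int i' + 1) (int m - int i' + int L)"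
    using prod_int_interval_reindex[where f = "\<lambda>t. of_int t - x" and c = "int m - int i'" and n = L]
    unfolding prod_uminus by (simp add: P_def)
  finally have second: "(\<Prod>i\<in>{1..L}. shift x (int i' - int i - int m))
      = (- 1) ^ L * P (int m - int i' + 1) (int m - int i' + int L)" .
  have "P (1 - int i') (int m - int i') * P (int m - int i' + 1) (int m - int i' + int L)
      = P (- int (i' - 1)) (int (m + L - i'))"
  proof -
    have "- int (i' - 1) = 1 - int i'" "int (m + L - i') = int m - int i' + int L"
      using assms by auto
    then show ?thesis
      unfolding P_def using assms by (simp only:) (rule prod_int_interval_split[symmetric]; simp)
  qed
  also have "\<dots> = (- 1) ^ i' * x * pochhammer (x + 1) (i' - 1) * pochhammer (1 - x) (m + L - i')"
    unfolding P_def prod_linear_factors_around_zero using assms by simp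
  finally show ?thesis
    unfolding first second by (simp add: power_add)
qed

lemma prod_columns:
  fixes x :: "'a::field"
  shows "(\<Prod>i'\<in>{1..L}. \<Prod>j\<in>{1..q i'}. of_int (int j - int i') - x)
      * (\<Prod>i'\<in>{1..L}. \<Prod>i\<in>{1..L}. shift x (int i' - int i - int (q i')))
    = (- 1) ^ (L choose 2) * x ^ L * (\<Prod>i\<in>{1..L}. pochhammer (x + 1) (L - i))
      * (\<Prod>i\<in>{1..L}. pochhammer (1 - x) (q i + L - i))"
proof -
  have "(\<Prod>i'\<in>{1..L}. \<Prod>j\<in>{1..q i'}. of_int (int j - int i') - x)
      * (\<Prod>i'\<in>{1..L}. \<Prod>i\<in>{1..L}. shift x (int i' - int i - int (q i')))
    = (\<Prod>i'\<in>{1..L}. (- 1) ^ (L + i') * x * pochhammer (x + 1) (i' - 1) * pochhammer (1 - x) (q i' + L - i'))"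
    unfolding prod.distrib[symmetric] by (rule prod.cong[OF refl], rule prod_column_factors) auto
  also have "\<dots> = (- 1) ^ (L choose 2) * x ^ L * (\<Prod>i'\<in>{1..L}. pochhammer (x + 1) (i' - 1))
      * (\<Prod>i\<in>{1..L}. pochhammer (1 - x) (q i + L - i))"
    unfolding prod.distrib prod_constant prod_sign_choose_two by simp
  also have "(\<Prod>i'\<in>{1..L}. pochhammer (x + 1) (i' - 1)) = (\<Prod>i\<in>{1..L}. pochhammer (x + 1) (L - i))"
    by (rule prod.reindex_bij_witness[where i = "\<lambda>i. L + 1 - i" and j = "\<lambda>i. L + 1 - i"]) auto
  finally show ?thesis .
qed

lemma prod_pochhammer_product:
  "(\<Prod>i\<in>{1..L}. pochhammer z (L - i)) * (\<Prod>i\<in>{1..L}. pochhammer (z + of_nat (L - i)) (p i))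
    = (\<Prod>i\<in>{1..L}. pochhammer z (p i + L - i))"
  unfolding prod.distrib[symmetric]
proof (rule prod.cong[OF refl])
  fix i assume "i \<in> {1..L}"
  then have "p i + L - i = (L - i) + p i"
    by simp
  then show "pochhammer z (L - i) * pochhammer (z + of_nat (L - i)) (p i) = pochhammer z (p i + L - i)"
    by (simp only: pochhammer_product')
qed

definition conjugate :: "(nat \<Rightarrow> nat) \<Rightarrow> nat \<Rightarrow> nat" where
  "conjugate q k = card {i. 1 \<le> i \<and> k \<le> q i}"

locale bounded_partition =
  fixes L :: nat and q :: "nat \<Rightarrow> nat"
  assumes vanishing: "L < i \<Longrightarrow> q i = 0"
    and antitone: "1 \<le> i \<Longrightarrow> i \<le> i' \<Longrightarrow> q i' \<le> q i"
begin

lemma column_eq_interval: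
  assumes "1 \<le> k"
  shows "{i. 1 \<le> i \<and> k \<le> q i} = {1..conjugate q k}"
proof -
  let ?S = "{i. 1 \<le> i \<and> k \<le> q i}"
  have "?S \<subseteq> {1..L}"
  proof
    fix i assume "i \<in> ?S"
    then show "i \<in> {1..L}"
      using vanishing[of i] assms by (cases "L < i") auto
  qed
  then have fin: "finite ?S"
    by (rule finite_subset) simp
  show ?thesis
  proof (cases "?S = {}")
    case True
    then show ?thesis
      unfolding conjugate_def by (simp only: True) simp
  next
    case False
    define m where "m = Max ?S"
    have "?S = {1..m}"
    proof
      show "?S \<subseteq> {1..m}"
        using Max_ge[OF fin] by (auto simp: m_def)
      have "k \<le> q m"
        using Max_in[OF fin False] by (simp add: m_def)
      then show "{1..m} \<subseteq> ?S"
        using antitone[of _ m] by (auto intro: order_trans)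
    qed
    then show ?thesis
      by (simp add: conjugate_def)
  qed
qed

lemma mem_diagram_iff:
  "(i, k) \<in> Sigma {1..L} (\<lambda>i. {1..q i}) \<longleftrightarrow> 1 \<le> i \<and> 1 \<le> k \<and> k \<le> q i"
proof -
  have "i \<le> L" if "1 \<le> k" "k \<le> q i"
  proof (rule ccontr)
    assume "\<not> i \<le> L"
    then show False
      using vanishing[of i] that by simp
  qed
  then show ?thesis
    by auto
qed

lemma mem_conjugate_diagram_iff:
  "(k, i) \<in> Sigma {1..q 1} (\<lambda>k. {1..conjugate q k}) \<longleftrightarrow> 1 \<le> i \<and> 1 \<le> k \<and> k \<le> q i"
proof (cases "1 \<le> k")
  case True
  have "k \<le> q 1" if "1 \<le> i" "k \<le> q i"
    using antitone[of 1 i] that by simp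
  moreover have "i \<in> {1..conjugate q k} \<longleftrightarrow> 1 \<le> i \<and> k \<le> q i"
    using column_eq_interval[OF True] by blast
  ultimately show ?thesis
    using True by auto
qed simp

lemma prod_diagram_transpose:
  "(\<Prod>k\<in>{1..q 1}. \<Prod>i\<in>{1..conjugate q k}. F i k) = (\<Prod>i\<in>{1..L}. \<Prod>k\<in>{1..q i}. F i k)"
proof -
  have "(\<Prod>(k, i)\<in>Sigma {1..q 1} (\<lambda>k. {1..conjugate q k}). F i k)
      = (\<Prod>(i, k)\<in>Sigma {1..L} (\<lambda>i. {1..q i}). F i k)"
    by (rule prod.reindex_bij_witness[where i = prod.swap and j = prod.swap])
      (auto simp only: split_paired_all swap_simp mem_diagram_iff mem_conjugate_diagram_iff case_prod_conv)
  then show ?thesis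
    by (simp add: prod.Sigma)
qed

lemma inj_on_beta_numbers: "inj_on (\<lambda>i. q i + L - i) {1..L}"
proof (rule inj_onI)
  have less: "q i' + L - i' < q i + L - i" if "1 \<le> i" "i < i'" "i' \<le> L" for i i'
    using antitone[of i i'] that by simp
  fix i i' assume "i \<in> {1..L}" "i' \<in> {1..L}" "q i + L - i = q i' + L - i'"
  then show "i = i'"
    using less[of i i'] less[of i' i] by (cases i i' rule: linorder_cases) auto
qed

text \<open>Both sides equal y times the product of phi (y + i - k) over the cells (i, k) of the diagram:
  the left side telescopes along columns, the right side along rows.\<close>

lemma conjugate_ratio_identity:
  assumes y: "shift_generic y"
  shows "shift y (- int (q 1)) *
      (\<Prod>k\<in>{1..q 1}. shift y (int (conjugate q k) - int k + 1) / shift y (int (conjugate q k) - int k))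
    = shift y (int L) * (\<Prod>i\<in>{1..L}. shift y (int i - int (q i) - 1) / shift y (int i - int (q i)))"
proof -
  define \<Phi> where "\<Phi> = (\<Prod>i\<in>{1..L}. \<Prod>k\<in>{1..q i}. phi (shift y (int i - int k)))"
  have column: "shift y (int (conjugate q k) - int k + 1) / shift y (int (conjugate q k) - int k)
      = shift y (1 - int k) / shift y (- int k) * (\<Prod>i\<in>{1..conjugate q k}. phi (shift y (int i - int k)))"
    for k
    using shift_ratio_telescope[OF shift_generic_shift[OF y, of "- int k"], of "conjugate q k"]
    by (simp add: algebra_simps)
  have row: "shift y (int i - int (q i) - 1) / shift y (int i - int (q i))
      = shift y (int i - 1) / shift y (int i) * (\<Prod>k\<in>{1..q i}. phi (shift y (int i - int k)))"
    for i
    using shift_ratio_telescope_down[OF shift_generic_shift[OF y, of "int i"], of "q i"]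
    by (simp add: algebra_simps)
  have "(\<Prod>k\<in>{1..q 1}. shift y (int (conjugate q k) - int k + 1) / shift y (int (conjugate q k) - int k))
      = y / shift y (- int (q 1)) * \<Phi>"
    unfolding column prod.distrib prod_shift_quotient_down[OF y] \<Phi>_def prod_diagram_transpose ..
  moreover have "(\<Prod>i\<in>{1..L}. shift y (int i - int (q i) - 1) / shift y (int i - int (q i)))
      = y / shift y (int L) * \<Phi>"
    unfolding row prod.distrib prod_shift_quotient[OF y] \<Phi>_def ..
  ultimately show ?thesis
    using y by simp
qed

lemma prod_row_cells:
  assumes x: "shift_generic x"
  shows "(\<Prod>j\<in>{1..m}. shift x (int j - int i - int (q 1)) *
      (\<Prod>k\<in>{1..q 1}. shift x (int j - int i + int (conjugate q k) - int k + 1)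
        / shift x (int j - int i + int (conjugate q k) - int k)))
    = (\<Prod>j\<in>{1..m}. shift x (int j - int i + int L)) *
      (\<Prod>i'\<in>{1..L}. shift x (int i' - int i - int (q i')) / shift x (int m - int i + int i' - int (q i')))"
proof -
  have cell: "shift x (int j - int i - int (q 1)) *
      (\<Prod>k\<in>{1..q 1}. shift x (int j - int i + int (conjugate q k) - int k + 1)
        / shift x (int j - int i + int (conjugate q k) - int k))
    = shift x (int j - int i + int L) *
      (\<Prod>i'\<in>{1..L}. shift x (int j - int i + int i' - int (q i') - 1) / shift x (int j - int i + int i' - int (q i')))"
    for j
    using conjugate_ratio_identity[OF shift_generic_shift[OF x, of "int j - int i"]]
    by (simp add: algebra_simps)
  have row: "(\<Prod>j\<in>{1..m}. shift x (int j - int i + int i' - int (q i') - 1) / shift x (int j - int i + int i' - int (q i')))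
      = shift x (int i' - int i - int (q i')) / shift x (int m - int i + int i' - int (q i'))"
    for i'
    using prod_shift_quotient[OF shift_generic_shift[OF x, of "int i' - int i - int (q i')"], of m]
    by (simp add: algebra_simps)
  show ?thesis
    unfolding cell prod.distrib by (subst prod.swap) (simp only: row)
qed

lemma prod_rows:
  assumes x: "shift_generic x"
  shows "(\<Prod>i\<in>{1..L}. \<Prod>j\<in>{1..p i}. shift x (int j - int i - int (q 1)) *
      (\<Prod>k\<in>{1..q 1}. shift x (int j - int i + int (conjugate q k) - int k + 1)
        / shift x (int j - int i + int (conjugate q k) - int k)))
    = (\<Prod>i\<in>{1..L}. pochhammer (x + 1 + of_nat (L - i)) (p i))
      * (\<Prod>i'\<in>{1..L}. \<Prod>i\<in>{1..L}. shift x (int i' - int i - int (q i')))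
      / (\<Prod>i\<in>{1..L}. \<Prod>i'\<in>{1..L}. shift x (int (p i + L - i) - int (q i' + L - i')))"
proof -
  have "(\<Prod>j\<in>{1..p i}. shift x (int j - int i + int L)) = pochhammer (x + 1 + of_nat (L - i)) (p i)"
    if "i \<le> L" for i
    using prod_of_nat_add_eq_pochhammer[where x = "x + of_nat (L - i)" and n = "p i"] that
    by (simp add: shift_def of_nat_diff algebra_simps)
  moreover have "shift x (int (p i + L - i) - int (q i' + L - i')) = shift x (int (p i) - int i + int i' - int (q i'))"
    if "i \<le> L" "i' \<le> L" for i i'
    using that by (simp add: of_nat_diff algebra_simps)
  ultimately have "(\<Prod>i\<in>{1..L}. \<Prod>j\<in>{1..p i}. shift x (int j - int i - int (q 1)) *
      (\<Prod>k\<in>{1..q 1}. shift x (int j - int i + int (conjugate q k) - int k + 1)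
        / shift x (int j - int i + int (conjugate q k) - int k)))
    = (\<Prod>i\<in>{1..L}. pochhammer (x + 1 + of_nat (L - i)) (p i) *
        (\<Prod>i'\<in>{1..L}. shift x (int i' - int i - int (q i'))
          / shift x (int (p i + L - i) - int (q i' + L - i'))))"
    unfolding prod_row_cells[OF x] by (intro prod.cong) simp_all
  also have "\<dots> = (\<Prod>i\<in>{1..L}. pochhammer (x + 1 + of_nat (L - i)) (p i))
      * (\<Prod>i\<in>{1..L}. \<Prod>i'\<in>{1..L}. shift x (int i' - int i - int (q i')))
      / (\<Prod>i\<in>{1..L}. \<Prod>i'\<in>{1..L}. shift x (int (p i + L - i) - int (q i' + L - i')))"
    by (simp only: prod.distrib prod_dividef times_divide_eq_right)
  also have "(\<Prod>i\<in>{1..L}. \<Prod>i'\<in>{1..L}. shift x (int i' - int i - int (q i')))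
      = (\<Prod>i'\<in>{1..L}. \<Prod>i\<in>{1..L}. shift x (int i' - int i - int (q i')))"
    by (rule prod.swap)
  finally show ?thesis .
qed

lemma diagram_product_identity:
  assumes x: "shift_generic x"
  shows "(\<Prod>i\<in>{1..L}. \<Prod>j\<in>{1..q i}. of_int (int j - int i) - x) *
    (\<Prod>i\<in>{1..L}. \<Prod>j\<in>{1..p i}. shift x (int j - int i - int (q 1)) *
      (\<Prod>k\<in>{1..q 1}. shift x (int j - int i + int (conjugate q k) - int k + 1)
        / shift x (int j - int i + int (conjugate q k) - int k)))
  = (- 1) ^ (L choose 2) * x ^ L *
    ((\<Prod>i\<in>{1..L}. pochhammer (x + 1) (p i + L - i)) * (\<Prod>i\<in>{1..L}. pochhammer (1 - x) (q i + L - i))) /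
    (\<Prod>i\<in>{1..L}. \<Prod>i'\<in>{1..L}. shift x (int (p i + L - i) - int (q i' + L - i')))"
proof -
  have "(\<Prod>i\<in>{1..L}. \<Prod>i'\<in>{1..L}. shift x (int (p i + L - i) - int (q i' + L - i'))) \<noteq> 0"
    using x by simp
  then show ?thesis
    unfolding prod_rows[OF x] prod_pochhammer_product[where z = "x + 1", symmetric]
    using prod_columns[where L = L and q = q and x = x] by (simp add: field_simps)
qed

end

lemma of_int_fract: "(of_int c :: 'a::idom fract) = Fract (of_int c) 1"
  by (cases c rule: int_cases2) (simp_all add: of_nat_fract)

lemma shift_generic_xind: "shift_generic xind"
  unfolding shift_generic_def
proof
  fix c :: int
  have "shift xind c = Fract ([:of_int c, 1:]) 1"
    by (simp add: shift_def xind_def of_int_fract of_int_poly)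
  then show "shift xind c \<noteq> 0"
    by (simp add: eq_fract Zero_fract_def)
qed

lemma bounded_partition_part:
  assumes "is_partition lam" "length lam \<le> L"
  shows "bounded_partition L (part lam)"
proof
  fix i :: nat
  assume "L < i"
  then show "part lam i = 0"
    using assms(2) by (simp add: part_def)
next
  fix i i' :: nat
  assume i: "1 \<le> i" "i \<le> i'"
  have sorted: "sorted_wrt (\<ge>) lam"
    using assms(1) by (simp add: is_partition_def)
  show "part lam i' \<le> part lam i"
  proof (cases "i < i' \<and> i' \<le> length lam")
    case True
    then have "i - 1 < i' - 1" "i' - 1 < length lam"
      using i by auto
    then have "lam ! (i' - 1) \<le> lam ! (i - 1)"
      using sorted_wrt_nth_less[OF sorted] by simp
    then show ?thesis
      using True i by (simp add: part_def)
  next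
    case False
    with i show ?thesis
      by (auto simp: part_def)
  qed
qed

lemma conjp_eq_conjugate: "conjp lam = conjugate (part lam)"
  by (simp add: fun_eq_iff conjp_def conjugate_def)

lemma prod_diagram:
  assumes "length lam \<le> L"
  shows "(\<Prod>(i, j)\<in>diagram lam. f i j) = (\<Prod>i\<in>{1..L}. \<Prod>j\<in>{1..part lam i}. f i j)"
proof -
  have "i \<le> L" if "1 \<le> j" "j \<le> part lam i" for i j
    using assms that by (cases "i \<le> length lam") (auto simp: part_def)
  then have "diagram lam = Sigma {1..L} (\<lambda>i. {1..part lam i})"
    by (auto simp: diagram_def)
  then show ?thesis
    by (simp add: prod.Sigma)
qed

lemma prod_beta_set:
  assumes "is_partition lam" "length lam \<le> L"
  shows "(\<Prod>a\<in>beta_set L lam. f a) = (\<Prod>i\<in>{1..L}. f (part lam i + L - i))"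
proof -
  interpret bounded_partition L "part lam"
    using assms by (rule bounded_partition_part)
  have "beta_set L lam = (\<lambda>i. part lam i + L - i) ` {1..L}"
    unfolding beta_set_def by auto
  then show ?thesis
    using prod.reindex[OF inj_on_beta_numbers, of f] by (simp add: comp_def)
qed

theorem lemma3p2:
  fixes lam mu :: "nat list" and L :: nat
  assumes "is_partition lam" and "is_partition mu"
    and "L \<ge> max (plen lam) (plen mu)"
  shows "Xfun lam mu = Yfun L lam mu"
proof -
  have lam: "length lam \<le> L" and mu: "length mu \<le> L"
    using assms(3) by (auto simp: plen_def)
  interpret bounded_partition L "part mu"
    using assms(2) mu by (rule bounded_partition_part)
  show ?thesis
    unfolding Xfun_def Yfun_def prod_diagram[OF lam] prod_diagram[OF mu] conjp_eq_conjugate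
      prod.cartesian_product[symmetric] prod_beta_set[OF assms(1) lam] prod_beta_set[OF assms(2) mu]
      prod_of_nat_add_eq_pochhammer prod_of_nat_diff_eq_pochhammer of_int_add_eq_shift
    by (rule diagram_product_identity[OF shift_generic_xind])
qed

end
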